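(* For all integers $n\ge1$ and $0\le i\le n-1$, the simplicial shelling components satisfy $$\Theta(\check{\Phi}_{n,i})=q^{i}\cdot[2(n-i)]\cdot[n-1]!.$$
   Context: $\mathbf{a},\mathbf{b}$ are non-commuting variables and $\mathbf{c}=\mathbf{a}+\mathbf{b}$. For a graded poset $P$ of rank $m+1$ with minimum $\hat0$, maximum $\hat1$ and rank function $\rho$, its $\mathbf{a}\mathbf{b}$-index is $\Psi(P)=\sum_{S\subseteq\{1,\dots,m\}} f_S\, v_S$, where for $S=\{s_1<\cdots<s_k\}$, $f_S$ is the number of chains $\hat0<x_1<\cdots<x_k<\hat1$ with $\rho(x_i)=s_i$, and $v_S=v_1\cdots v_m$ with $v_i=\mathbf{b}$ if $i\in S$, $v_i=\mathbf{a}-\mathbf{b}$ otherwise. $B_n$ is the Boolean algebra of rank $n$. $G$ is the derivation of $\mathbb{Z}\langle\mathbf{a},\mathbf{b}\rangle$ with $G(1)=0$, $G(\mathbf{a})=\mathbf{b}\mathbf{a}$, $G(\mathbf{b})=\mathbf{a}\mathbf{b}$. The simplicial shelling components are defined by $\check{\Phi}_{n,0}=\Psi(B_n)\cdot\mathbf{c}$ for $n\ge1$ and $\check{\Phi}_{n,i}=G(\check{\Phi}_{n-1,i-1})$ for $1\le i\le n-1$. The Major MacMahon map $\Theta:\mathbb{Z}\langle\mathbf{a},\mathbf{b}\rangle\to\mathbb{Z}[q]$ is linear with $\Theta(u_1\cdots u_n)=\prod_{i:\,u_i=\mathbf{b}}q^i$ on monomials. $[m]=1+q+\cdots+q^{m-1}$,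 $[m]!=[m]\cdots[1]$, $[0]!=1$. *)

theory Defs
  imports "HOL-Computational_Algebra.Polynomial"
begin

datatype letter = La | Lb

type_synonym word = "letter list"

text \<open>An element of Z<a,b> is represented as a formal sum (list of coefficient/monomial
pairs); the element it denotes is the sum of the terms.\<close>
type_synonym ncpoly = "(int \<times> word) list"

definition nc_one :: ncpoly where "nc_one = [(1, [])]"
definition nc_a :: ncpoly where "nc_a = [(1, [La])]"
definition nc_b :: ncpoly where "nc_b = [(1, [Lb])]"
definition nc_add :: "ncpoly \<Rightarrow> ncpoly \<Rightarrow> ncpoly" where "nc_add p q = p @ q"
definition nc_smult :: "int \<Rightarrow> ncpoly \<Rightarrow> ncpoly" where
  "nc_smult c p = map (\<lambda>(d, w). (c * d, w)) p"
definition nc_minus :: "ncpoly \<Rightarrow> ncpoly \<Rightarrow> ncpoly" where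
  "nc_minus p q = p @ nc_smult (-1) q"
definition nc_mult :: "ncpoly \<Rightarrow> ncpoly \<Rightarrow> ncpoly" where
  "nc_mult p q = [(c * d, u @ v). (c, u) \<leftarrow> p, (d, v) \<leftarrow> q]"
definition nc_prod :: "ncpoly list \<Rightarrow> ncpoly" where
  "nc_prod ps = foldr nc_mult ps nc_one"

definition nc_c :: ncpoly where "nc_c = nc_add nc_a nc_b"

fun G_letter :: "letter \<Rightarrow> word" where
  "G_letter La = [Lb, La]"
| "G_letter Lb = [La, Lb]"

definition G_word :: "word \<Rightarrow> ncpoly" where
  "G_word w = [(1, take i w @ G_letter (w ! i) @ drop (Suc i) w). i \<leftarrow> [0..<length w]]"

definition G :: "ncpoly \<Rightarrow> ncpoly" where
  "G p = concat (map (\<lambda>(c, w). nc_smult c (G_word w)) p)"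

text \<open>B_n = subsets of {1..n} ordered by inclusion, rank = cardinality.
  For S = {s_1 < ... < s_k} (given as increasing list ss), f_S counts chains
  {} < x_1 < ... < x_k < {1..n} with card x_j = s_j.\<close>
definition flag_count_B :: "nat \<Rightarrow> nat list \<Rightarrow> nat" where
  "flag_count_B n ss = card {xs :: nat set list. length xs = length ss \<and>
      (\<forall>j < length ss. {} \<subset> xs ! j \<and> xs ! j \<subset> {1..n} \<and> card (xs ! j) = ss ! j) \<and>
      (\<forall>j. Suc j < length ss \<longrightarrow> xs ! j \<subset> xs ! Suc j)}"

definition v_word :: "nat \<Rightarrow> nat list \<Rightarrow> ncpoly" where
  "v_word m ss = nc_prod (map (\<lambda>i. if i \<in> set ss then nc_b else nc_minus nc_a nc_b) [1..<Suc m])"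

text \<open>Sum over all S \<subseteq> {1..n-1}; subseqs [1..<n] lists each subset once, as an increasing list.\<close>
definition Psi_B :: "nat \<Rightarrow> ncpoly" where
  "Psi_B n = concat (map (\<lambda>ss. nc_smult (int (flag_count_B n ss)) (v_word (n - 1) ss))
                          (subseqs [1..<n]))"

fun Phi_check :: "nat \<Rightarrow> nat \<Rightarrow> ncpoly" where
  "Phi_check n 0 = nc_mult (Psi_B n) nc_c"
| "Phi_check 0 (Suc i) = []"   (* not used: only 1 \<le> i \<le> n-1 is meaningful *)
| "Phi_check (Suc n) (Suc i) = G (Phi_check n i)"

definition Theta_word :: "word \<Rightarrow> int poly" where
  "Theta_word w = (\<Prod>i\<in>{i. i < length w \<and> w ! i = Lb}. monom 1 (Suc i))"

definition Theta :: "ncpoly \<Rightarrow> int poly" where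
  "Theta p = (\<Sum>(c, w) \<leftarrow> p. smult c (Theta_word w))"

definition qint :: "nat \<Rightarrow> int poly" where
  "qint m = (\<Sum>j<m. monom 1 j)"

definition qfact :: "nat \<Rightarrow> int poly" where
  "qfact m = (\<Prod>j=1..m. qint j)"

end

theory Submission
  imports Defs
begin

text \<open>\<open>Theta\<close> is multiplicative on homogeneous polynomials once the second factor is evaluated
with its positions shifted by the degree of the first. The derivation \<open>G\<close> replaces, in a
monomial of degree \<open>m\<close>, one letter at a time by two letters; comparing weights, the \<open>b\<close>'s
gain the exponents \<open>1, ..., #b\<close> and the \<open>a\<close>'s the exponents \<open>#b + 1, ..., m\<close>, so
\<open>Theta (G p) = q [m] Theta p\<close> for \<open>p\<close> homogeneous of degree \<open>m\<close>. Everything thus reduces to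
\<open>Theta (Psi B_n) = [n]!\<close>. Here \<open>Theta (v_S) = \<Prod>_{i\<in>S} q^i \<Prod>_{i\<notin>S} (1 - q^i)\<close>, and sorting the
chains by their top element gives a recursion in \<open>n\<close> that \<open>[n]!\<close> satisfies by the binomial
theorem for \<open>(q + (1 - q))^n\<close>. Finally \<open>Theta (Psi B_n \<cdot> c) = [n]! (1 + q^n) = [2n] [n-1]!\<close>,
and each application of \<open>G\<close> contributes \<open>q [n]\<close>.\<close>

section \<open>q-integers and q-factorials\<close>

definition q :: "int poly" where "q = monom 1 1"

lemma monom_one_eq_q_power: "monom 1 n = q ^ n"
  by (simp add: q_def monom_power)

lemma q_neq_one: "q \<noteq> 1"
proof
  assume "q = 1"
  then have "coeff q 1 = coeff 1 1" by simp
  then show False by (simp add: q_def)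
qed

lemma qint_eq_sum: "qint n = (\<Sum>j<n. q ^ j)"
  by (simp add: qint_def monom_one_eq_q_power)

lemma one_minus_q_times_qint: "(1 - q) * qint n = 1 - q ^ n"
  by (simp add: qint_eq_sum one_diff_power_eq)

lemma qint_double: "qint (2 * n) = qint n * (1 + q ^ n)"
proof -
  have "q ^ (2 * n) = q ^ n * q ^ n" by (simp add: mult_2 power_add)
  then have "(1 - q) * qint (2 * n) = (1 - q) * (qint n * (1 + q ^ n))"
    unfolding mult.assoc[symmetric] one_minus_q_times_qint by (simp add: algebra_simps)
  then show ?thesis using q_neq_one by simp
qed

lemma qfact_Suc: "qfact (Suc n) = qfact n * qint (Suc n)"
  by (simp add: qfact_def)

lemma one_minus_q_power_qfact: "(1 - q) ^ n * qfact n = (\<Prod>i=1..n. 1 - q ^ i)"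
proof -
  have "(1 - q) ^ n * qfact n = (\<Prod>i=1..n. (1 - q) * qint i)"
    by (simp add: qfact_def prod.distrib)
  then show ?thesis by (simp add: one_minus_q_times_qint)
qed

lemma sum_power_lessThan_add:
  fixes x :: "'a::comm_semiring_1"
  shows "(\<Sum>j<r + s. x ^ j) = (\<Sum>j<r. x ^ j) + x ^ r * (\<Sum>j<s. x ^ j)"
  by (induction s) (simp_all add: algebra_simps power_add)

section \<open>The Major MacMahon map with an offset\<close>

text \<open>\<open>Theta_word_at k w\<close> is the contribution of \<open>w\<close> to \<open>Theta\<close> of a word in which \<open>w\<close> is
preceded by \<open>k\<close> letters.\<close>

fun Theta_word_at :: "nat \<Rightarrow> word \<Rightarrow> int poly" where
  "Theta_word_at k [] = 1"
| "Theta_word_at k (x # w) = (if x = Lb then q ^ Suc k else 1) * Theta_word_at (Suc k) w"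

lemma Theta_word_at_conv_prod:
  "Theta_word_at k w = (\<Prod>i<length w. if w ! i = Lb then q ^ Suc (k + i) else 1)"
  by (induction w arbitrary: k)
    (simp_all add: prod.lessThan_Suc_shift del: prod.lessThan_Suc power_Suc cong: if_cong)

lemma Theta_word_eq_Theta_word_at: "Theta_word w = Theta_word_at 0 w"
  unfolding Theta_word_def Theta_word_at_conv_prod monom_one_eq_q_power
  by (simp add: prod.inter_filter[symmetric] del: power_Suc cong: if_cong)

lemma Theta_word_at_append:
  "Theta_word_at k (u @ v) = Theta_word_at k u * Theta_word_at (k + length u) v"
  by (induction u arbitrary: k) (simp_all add: mult.assoc)

lemma Theta_word_at_Suc: "Theta_word_at (Suc k) w = q ^ count_list w Lb * Theta_word_at k w"
  by (induction w arbitrary: k) (auto simp: power_add algebra_simps)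

definition Theta_at :: "nat \<Rightarrow> ncpoly \<Rightarrow> int poly" where
  "Theta_at k p = (\<Sum>(c, w) \<leftarrow> p. smult c (Theta_word_at k w))"

lemma Theta_eq_Theta_at: "Theta p = Theta_at 0 p"
  by (simp add: Theta_def Theta_at_def Theta_word_eq_Theta_word_at)

lemma Theta_at_Nil [simp]: "Theta_at k [] = 0"
  and Theta_at_Cons [simp]: "Theta_at k ((c, w) # p) = smult c (Theta_word_at k w) + Theta_at k p"
  and Theta_at_append [simp]: "Theta_at k (p @ r) = Theta_at k p + Theta_at k r"
  by (simp_all add: Theta_at_def)

lemma Theta_at_concat: "Theta_at k (concat ps) = (\<Sum>p\<leftarrow>ps. Theta_at k p)"
  by (induction ps) simp_all

lemma Theta_at_nc_smult: "Theta_at k (nc_smult c p) = smult c (Theta_at k p)"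
  by (induction p) (auto simp: nc_smult_def smult_add_right)

lemma Theta_at_map_Cons:
  "Theta_at k (map (\<lambda>(c, w). (c, x # w)) p) =
    (if x = Lb then q ^ Suc k else 1) * Theta_at (Suc k) p"
  by (induction p) (auto simp: algebra_simps)

definition homogeneous :: "nat \<Rightarrow> ncpoly \<Rightarrow> bool" where
  "homogeneous m p \<longleftrightarrow> (\<forall>(c, w) \<in> set p. length w = m)"

lemma homogeneous_Nil [simp]: "homogeneous m []"
  and homogeneous_Cons [simp]: "homogeneous m ((c, w) # p) \<longleftrightarrow> length w = m \<and> homogeneous m p"
  and homogeneous_append [simp]: "homogeneous m (p @ r) \<longleftrightarrow> homogeneous m p \<and> homogeneous m r"
  by (auto simp: homogeneous_def)

lemma homogeneous_concat: "(\<And>p. p \<in> set ps \<Longrightarrow> homogeneous m p) \<Longrightarrow> homogeneous m (concat ps)"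
  by (auto simp: homogeneous_def)

lemma homogeneous_nc_smult: "homogeneous m p \<Longrightarrow> homogeneous m (nc_smult c p)"
  by (auto simp: homogeneous_def nc_smult_def)

lemma homogeneous_nc_mult:
  "homogeneous m p \<Longrightarrow> homogeneous k r \<Longrightarrow> homogeneous (m + k) (nc_mult p r)"
  by (fastforce simp: homogeneous_def nc_mult_def)

lemma nc_mult_Cons: "nc_mult ((c, u) # p) r = map (\<lambda>(d, v). (c * d, u @ v)) r @ nc_mult p r"
  by (simp add: nc_mult_def)

lemma Theta_at_nc_mult:
  "homogeneous m p \<Longrightarrow> Theta_at k (nc_mult p r) = Theta_at k p * Theta_at (k + m) r"
proof (induction p)
  case Nil
  then show ?case by (simp add: nc_mult_def)
next
  case (Cons x p)
  obtain c u where x: "x = (c, u)" by fastforce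
  have "Theta_at k (map (\<lambda>(d, v). (c * d, u @ v)) r) =
      smult c (Theta_word_at k u) * Theta_at (k + length u) r"
    by (induction r) (auto simp: Theta_word_at_append algebra_simps smult_add_right)
  with Cons show ?case by (simp add: x nc_mult_Cons algebra_simps)
qed

section \<open>The derivation G\<close>

lemma G_word_Cons:
  "G_word (x # w) = (1, G_letter x @ w) # map (\<lambda>(c, u). (c, x # u)) (G_word w)"
  by (simp add: G_word_def upt_conv_Cons map_Suc_upt[symmetric] del: upt_Suc)

lemma count_list_La_Lb: "count_list w La + count_list w Lb = length w"
proof (induction w)
  case (Cons x w)
  then show ?case by (cases x) auto
qed simp

lemma Theta_at_G_word_count_list:
  "Theta_at k (G_word w) = Theta_word_at k w *
     ((\<Sum>j<count_list w Lb. q ^ Suc j) +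
      q ^ (k + count_list w Lb + 1) * (\<Sum>j<count_list w La. q ^ j))"
proof (induction w arbitrary: k)
  case Nil
  then show ?case by (simp add: G_word_def)
next
  case (Cons x w)
  show ?case
  proof (cases x)
    case La
    then show ?thesis
      by (simp add: G_word_Cons Theta_at_map_Cons Cons.IH Theta_word_at_Suc sum.lessThan_Suc_shift
          sum_distrib_left power_add algebra_simps del: sum.lessThan_Suc)
  next
    case Lb
    then show ?thesis
      by (simp add: G_word_Cons Theta_at_map_Cons Cons.IH Theta_word_at_Suc
          sum_distrib_left power_add algebra_simps)
  qed
qed

lemma Theta_at_G_word: "Theta_at 0 (G_word w) = q * qint (length w) * Theta_word_at 0 w"
proof -
  let ?a = "count_list w La" and ?b = "count_list w Lb"
  have "q * qint (length w) = q * ((\<Sum>j<?b. q ^ j) + q ^ ?b * (\<Sum>j<?a. q ^ j))"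
    using count_list_La_Lb[of w] sum_power_lessThan_add[of q ?b ?a]
    by (simp add: qint_eq_sum add.commute)
  also have "\<dots> = (\<Sum>j<?b. q ^ Suc j) + q ^ (?b + 1) * (\<Sum>j<?a. q ^ j)"
    by (simp add: sum_distrib_left algebra_simps)
  finally show ?thesis by (simp add: Theta_at_G_word_count_list mult.commute)
qed

lemma Theta_at_G: "homogeneous m p \<Longrightarrow> Theta_at 0 (G p) = q * qint m * Theta_at 0 p"
  by (induction p) (auto simp: G_def Theta_at_nc_smult Theta_at_G_word algebra_simps smult_add_right)

lemma homogeneous_G_word: "homogeneous (Suc (length w)) (G_word w)"
proof -
  have "length (G_letter x) = 2" for x by (cases x) auto
  then show ?thesis by (auto simp: homogeneous_def G_word_def)
qed

lemma homogeneous_G: "homogeneous m p \<Longrightarrow> homogeneous (Suc m) (G p)"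
  by (induction p) (auto simp: G_def intro!: homogeneous_nc_smult homogeneous_G_word)

lemma homogeneous_nc_prod:
  "\<forall>p\<in>set ps. homogeneous 1 p \<Longrightarrow> homogeneous (length ps) (nc_prod ps)"
proof (induction ps)
  case Nil
  then show ?case by (simp add: nc_prod_def nc_one_def)
next
  case (Cons p ps)
  then show ?case using homogeneous_nc_mult[of 1 p] by (simp add: nc_prod_def)
qed

lemma Theta_at_nc_prod:
  "\<forall>p\<in>set ps. homogeneous 1 p \<Longrightarrow>
    Theta_at k (nc_prod ps) = (\<Prod>j<length ps. Theta_at (k + j) (ps ! j))"
proof (induction ps arbitrary: k)
  case Nil
  then show ?case by (simp add: nc_prod_def nc_one_def)
next
  case (Cons p ps)
  have "Theta_at k (nc_prod (p # ps)) = Theta_at k p * Theta_at (k + 1) (nc_prod ps)"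
    using Cons.prems Theta_at_nc_mult[of 1 p] by (simp add: nc_prod_def)
  with Cons show ?case by (simp add: prod.lessThan_Suc_shift del: prod.lessThan_Suc)
qed

definition v_weight :: "nat \<Rightarrow> nat set \<Rightarrow> int poly" where
  "v_weight n S = (\<Prod>i\<in>{1..<n}. if i \<in> S then q ^ i else 1 - q ^ i)"

definition v_letter :: "nat list \<Rightarrow> nat \<Rightarrow> ncpoly" where
  "v_letter ss i = (if i \<in> set ss then nc_b else nc_minus nc_a nc_b)"

lemma homogeneous_v_letter: "homogeneous 1 (v_letter ss i)"
  by (simp add: v_letter_def nc_minus_def nc_a_def nc_b_def nc_smult_def)

lemma Theta_at_v_letter:
  "Theta_at k (v_letter ss i) = (if i \<in> set ss then q ^ Suc k else 1 - q ^ Suc k)"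
  by (simp add: v_letter_def nc_minus_def nc_a_def nc_b_def nc_smult_def)

lemma v_word_eq_nc_prod: "v_word m ss = nc_prod (map (v_letter ss) [1..<Suc m])"
  by (simp add: v_word_def v_letter_def[abs_def] del: upt_Suc)

lemma homogeneous_v_letters: "\<forall>p\<in>set (map (v_letter ss) [1..<Suc m]). homogeneous 1 p"
  using homogeneous_v_letter by auto

lemma homogeneous_v_word: "homogeneous m (v_word m ss)"
  using homogeneous_nc_prod[OF homogeneous_v_letters] by (simp add: v_word_eq_nc_prod del: upt_Suc)

lemma Theta_at_v_word: "Theta_at 0 (v_word m ss) = v_weight (Suc m) (set ss)"
proof -
  have "{1..<Suc m} = Suc ` {..<m}" by (auto simp: image_iff less_Suc_eq_0_disj)
  then have "v_weight (Suc m) (set ss) =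
      (\<Prod>j<m. if Suc j \<in> set ss then q ^ Suc j else 1 - q ^ Suc j)"
    by (simp add: v_weight_def prod.reindex del: power_Suc)
  then show ?thesis
    using Theta_at_nc_prod[OF homogeneous_v_letters, of 0]
    by (simp add: v_word_eq_nc_prod homogeneous_v_letter Theta_at_v_letter nth_map_upt
        del: upt_Suc power_Suc)
qed

lemma homogeneous_Psi_B: "homogeneous (n - 1) (Psi_B n)"
  by (auto simp: Psi_B_def intro!: homogeneous_concat homogeneous_nc_smult homogeneous_v_word)

lemma Theta_Psi_B_eq_sum:
  "Theta (Psi_B n) = (\<Sum>ss\<leftarrow>subseqs [1..<n]. of_nat (flag_count_B n ss) * v_weight n (set ss))"
proof -
  have "v_weight (Suc (n - 1)) S = v_weight n S" for S
    by (cases n) (simp_all add: v_weight_def)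
  then show ?thesis
    by (simp add: Theta_eq_Theta_at Psi_B_def Theta_at_concat Theta_at_nc_smult Theta_at_v_word
        comp_def of_nat_poly)
qed

section \<open>Counting chains in the Boolean algebra\<close>

definition rank_chains :: "'a set \<Rightarrow> nat list \<Rightarrow> 'a set list set" where
  "rank_chains A ss =
    {xs. list_all2 (\<lambda>X s. {} \<subset> X \<and> X \<subset> A \<and> card X = s) xs ss \<and> sorted_wrt (\<subset>) xs}"

lemma flag_count_B_eq_card_rank_chains: "flag_count_B n ss = card (rank_chains {1..n} ss)"
  unfolding flag_count_B_def rank_chains_def list_all2_conv_all_nth
  by (intro arg_cong[where f = card] Collect_cong) (auto simp: sorted_wrt_iff_nth_Suc_transp)

lemma rank_chains_snoc:
  "rank_chains A (ss @ [t]) =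
    (\<Union>Y\<in>{Y. {} \<subset> Y \<and> Y \<subset> A \<and> card Y = t}. (\<lambda>ys. ys @ [Y]) ` rank_chains Y ss)"
  (is "_ = ?R")
proof (intro equalityI subsetI)
  fix xs assume "xs \<in> rank_chains A (ss @ [t])"
  then obtain ys Y where xs: "xs = ys @ [Y]"
    and ys: "list_all2 (\<lambda>X s. {} \<subset> X \<and> X \<subset> A \<and> card X = s) ys ss" "sorted_wrt (\<subset>) ys"
    and below: "\<forall>X\<in>set ys. X \<subset> Y" and Y: "{} \<subset> Y" "Y \<subset> A" "card Y = t"
    by (clarsimp simp: rank_chains_def list_all2_append2 list_all2_Cons2 sorted_wrt_append) blast
  have "list_all2 (\<lambda>X s. {} \<subset> X \<and> X \<subset> Y \<and> card X = s) ys ss"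
    using ys(1) below by (auto simp: list_all2_conv_all_nth)
  with ys(2) have "ys \<in> rank_chains Y ss" by (simp add: rank_chains_def)
  with xs Y show "xs \<in> ?R"
    by blast
next
  fix xs assume "xs \<in> ?R"
  then obtain ys Y where xs: "xs = ys @ [Y]" and Y: "{} \<subset> Y" "Y \<subset> A" "card Y = t"
    and ys: "list_all2 (\<lambda>X s. {} \<subset> X \<and> X \<subset> Y \<and> card X = s) ys ss" "sorted_wrt (\<subset>) ys"
    by (auto simp: rank_chains_def)
  have "\<forall>X\<in>set ys. X \<subset> Y"
    using ys(1) by (metis (no_types, lifting) in_set_conv_nth list_all2_conv_all_nth)
  moreover have "list_all2 (\<lambda>X s. {} \<subset> X \<and> X \<subset> A \<and> card X = s) ys ss"
    using ys(1) by (rule list_all2_mono) (use Y(2) in \<open>blast intro: psubset_trans\<close>)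
  ultimately show "xs \<in> rank_chains A (ss @ [t])"
    using xs Y ys(2) by (simp add: rank_chains_def list_all2_appendI sorted_wrt_append)
qed
text \<open>The rank list is read from the top down: \<open>chain_count N (s # ss)\<close> counts chains below a
set of size \<open>N\<close> whose largest member has size \<open>s\<close>.\<close>

fun chain_count :: "nat \<Rightarrow> nat list \<Rightarrow> nat" where
  "chain_count N [] = 1"
| "chain_count N (s # ss) = (if 0 < s \<and> s < N then (N choose s) * chain_count s ss else 0)"

lemma rank_chains_Nil: "rank_chains A [] = {[]}"
  by (auto simp: rank_chains_def)

lemma finite_rank_chains: "finite A \<Longrightarrow> finite (rank_chains A ss)"
proof -
  assume "finite A"
  have "rank_chains A ss \<subseteq> {xs. set xs \<subseteq> Pow A \<and> length xs = length ss}"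
  proof
    fix xs assume "xs \<in> rank_chains A ss"
    then have "length xs = length ss" "\<forall>i<length xs. xs ! i \<subseteq> A"
      by (auto simp: rank_chains_def list_all2_conv_all_nth dest: psubset_imp_subset)
    then show "xs \<in> {xs. set xs \<subseteq> Pow A \<and> length xs = length ss}"
      by (fastforce simp: in_set_conv_nth)
  qed
  moreover have "finite {xs. set xs \<subseteq> Pow A \<and> length xs = length ss}"
    using \<open>finite A\<close> by (intro finite_lists_length_eq) simp
  ultimately show ?thesis by (rule finite_subset)
qed

lemma card_rank_chains: "finite A \<Longrightarrow> card (rank_chains A ss) = chain_count (card A) (rev ss)"
proof (induction ss arbitrary: A rule: rev_induct)
  case Nil
  then show ?case by (simp add: rank_chains_Nil)
next
  case (snoc t ss)
  let ?I = "{Y. {} \<subset> Y \<and> Y \<subset> A \<and> card Y = t}"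
  show ?case
  proof (cases "0 < t \<and> t < card A")
    case False
    have no_top: "?I = {}"
    proof (intro equals0I)
      fix Y assume "Y \<in> ?I"
      then have Y: "Y \<noteq> {}" "Y \<subset> A" "card Y = t" by auto
      with snoc.prems have "finite Y" by (meson finite_subset psubset_imp_subset)
      with Y snoc.prems have "0 < t" "t < card A" by (auto intro: psubset_card_mono)
      with False show False by simp
    qed
    show ?thesis unfolding rank_chains_snoc no_top using False by auto
  next
    case True
    have I: "?I = {Y. Y \<subseteq> A \<and> card Y = t}"
    proof (intro Collect_cong iffI)
      fix Y assume "Y \<subseteq> A \<and> card Y = t"
      with True show "{} \<subset> Y \<and> Y \<subset> A \<and> card Y = t" by auto
    qed auto
    have fin: "finite Y" if "Y \<in> ?I" for Y
      using that snoc.prems finite_subset by blast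
    have "card (rank_chains A (ss @ [t])) = (\<Sum>Y\<in>?I. card ((\<lambda>ys. ys @ [Y]) ` rank_chains Y ss))"
      unfolding rank_chains_snoc using snoc.prems
      by (intro card_UN_disjoint)
        (auto simp: I intro!: finite_rank_chains intro: rev_finite_subset)
    also have "\<dots> = (\<Sum>Y\<in>?I. chain_count t (rev ss))"
      using fin snoc.IH by (simp add: card_image inj_on_def)
    also have "\<dots> = (card A choose t) * chain_count t (rev ss)"
      using n_subsets[OF snoc.prems] by (simp add: I)
    finally show ?thesis using True by simp
  qed
qed
lemma flag_count_B_eq_chain_count: "flag_count_B n ss = chain_count n (rev ss)"
  by (simp add: flag_count_B_eq_card_rank_chains card_rank_chains)

lemma sum_list_subseqs_snoc:
  fixes f :: "'a list \<Rightarrow> 'b::comm_monoid_add"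
  shows "(\<Sum>ys\<leftarrow>subseqs (xs @ [x]). f ys) =
    (\<Sum>ys\<leftarrow>subseqs xs. f ys) + (\<Sum>ys\<leftarrow>subseqs xs. f (ys @ [x]))"
proof (induction xs arbitrary: f)
  case Nil
  then show ?case by (simp add: add.commute)
next
  case (Cons a xs)
  show ?case
    using Cons.IH[of "\<lambda>ys. f (a # ys)"] Cons.IH[of f] by (simp add: Let_def comp_def ac_simps)
qed

lemma sum_list_subseqs_upt:
  "(\<Sum>ss\<leftarrow>subseqs [1..<Suc m]. f ss) =
    f [] + (\<Sum>s<m. \<Sum>ss\<leftarrow>subseqs [1..<Suc s]. f (ss @ [Suc s]))"
  by (induction m) (simp_all add: sum_list_subseqs_snoc add.assoc)

definition gap_prod :: "nat \<Rightarrow> nat \<Rightarrow> int poly" where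
  "gap_prod n s = (\<Prod>i\<in>{Suc s..<n}. 1 - q ^ i)"

lemma v_weight_empty: "v_weight n {} = gap_prod n 0"
  by (simp add: v_weight_def gap_prod_def)

lemma v_weight_insert_max:
  assumes "0 < s" "s < n" "S \<subseteq> {..<s}"
  shows "v_weight n (insert s S) = v_weight s S * q ^ s * gap_prod n s"
proof -
  let ?f = "\<lambda>i. if i \<in> insert s S then q ^ i else 1 - q ^ i"
  have "v_weight n (insert s S) = prod ?f {1..<s} * prod ?f {s..<n}"
    unfolding v_weight_def by (rule prod.atLeastLessThan_concat[symmetric]) (use assms in auto)
  also have "prod ?f {1..<s} = v_weight s S"
    unfolding v_weight_def by (rule prod.cong) auto
  also have "prod ?f {s..<n} = q ^ s * gap_prod n s"
    unfolding gap_prod_def using assms by (auto simp: prod.atLeast_Suc_lessThan intro!: prod.cong)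
  finally show ?thesis by (simp add: mult.assoc)
qed

lemma Theta_Psi_B_0: "Theta (Psi_B 0) = 1"
  by (simp add: Theta_Psi_B_eq_sum flag_count_B_eq_chain_count v_weight_def)

text \<open>Group the sets \<open>S\<close> by their largest element \<open>s\<close>: the part of a chain below its rank-\<open>s\<close>
member is a chain of \<open>B_s\<close>, and there are \<open>n choose s\<close> choices for that member.\<close>

lemma Theta_Psi_B_recurrence:
  assumes "0 < n"
  shows "Theta (Psi_B n) = (\<Sum>s<n. of_nat (n choose s) * q ^ s * gap_prod n s * Theta (Psi_B s))"
proof -
  obtain m where n: "n = Suc m" using assms by (cases n) auto
  define h where "h ss = of_nat (chain_count n (rev ss)) * v_weight n (set ss)" for ss
  have top: "h (ss @ [Suc s]) = of_nat (n choose Suc s) * q ^ Suc s * gap_prod n (Suc s) *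
      (of_nat (chain_count (Suc s) (rev ss)) * v_weight (Suc s) (set ss))"
    if "s < m" "ss \<in> set (subseqs [1..<Suc s])" for s ss
  proof -
    have "set ss \<in> set ` set (subseqs [1..<Suc s])" using that(2) by blast
    then have "set ss \<subseteq> {..<Suc s}" by (auto simp: subseqs_powset simp del: upt_Suc)
    then show ?thesis using that(1) by (simp add: h_def n v_weight_insert_max algebra_simps)
  qed
  have "Theta (Psi_B n) = (\<Sum>ss\<leftarrow>subseqs [1..<Suc m]. h ss)"
    by (simp add: Theta_Psi_B_eq_sum flag_count_B_eq_chain_count n h_def del: upt_Suc)
  also have "\<dots> = h [] + (\<Sum>s<m. \<Sum>ss\<leftarrow>subseqs [1..<Suc s]. h (ss @ [Suc s]))"
    by (rule sum_list_subseqs_upt)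
  also have "\<dots> = h [] + (\<Sum>s<m. of_nat (n choose Suc s) * q ^ Suc s * gap_prod n (Suc s) *
      Theta (Psi_B (Suc s)))"
    by (simp add: top Theta_Psi_B_eq_sum flag_count_B_eq_chain_count sum_list_const_mult
        cong: map_cong del: upt_Suc)
  also have "h [] = of_nat (n choose 0) * q ^ 0 * gap_prod n 0 * Theta (Psi_B 0)"
    by (simp add: h_def Theta_Psi_B_0 v_weight_empty)
  finally show ?thesis by (simp add: n sum.lessThan_Suc_shift del: sum.lessThan_Suc)
qed

lemma q_pochhammer_times_gap_prod:
  "s < n \<Longrightarrow> (\<Prod>i=1..s. 1 - q ^ i) * gap_prod n s = (\<Prod>i=1..<n. 1 - q ^ i)"
  unfolding gap_prod_def atLeastLessThanSuc_atLeastAtMost[symmetric]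
  by (rule prod.atLeastLessThan_concat) auto

lemma binomial_q_one_minus_q:
  "(\<Sum>s<n. of_nat (n choose s) * q ^ s * (1 - q) ^ (n - s)) = 1 - q ^ n"
proof -
  have "1 = (q + (1 - q)) ^ n" by simp
  also have "\<dots> = (\<Sum>s\<le>n. of_nat (n choose s) * q ^ s * (1 - q) ^ (n - s))"
    by (rule binomial_ring)
  also have "\<dots> = (\<Sum>s<n. of_nat (n choose s) * q ^ s * (1 - q) ^ (n - s)) + q ^ n"
    by (simp add: lessThan_Suc_atMost[symmetric])
  finally show ?thesis by (simp add: algebra_simps)
qed

text \<open>After multiplication by \<open>(1 - q)^n\<close> this is the binomial expansion of \<open>(q + (1 - q))^n\<close>.\<close>

lemma qfact_recurrence:
  assumes "0 < n"
  shows "(\<Sum>s<n. of_nat (n choose s) * q ^ s * gap_prod n s * qfact s) = qfact n"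
proof -
  let ?P = "\<Prod>i=1..<n. 1 - q ^ i"
  have "(1 - q) ^ n * (\<Sum>s<n. of_nat (n choose s) * q ^ s * gap_prod n s * qfact s)
      = (\<Sum>s<n. of_nat (n choose s) * q ^ s * (1 - q) ^ (n - s) * ?P)"
    unfolding sum_distrib_left
  proof (rule sum.cong[OF refl])
    fix s assume "s \<in> {..<n}"
    then have s: "s < n" by simp
    then have "(1 - q) ^ n = (1 - q) ^ (n - s) * (1 - q) ^ s"
      by (simp add: power_add[symmetric])
    then have "(1 - q) ^ n * (of_nat (n choose s) * q ^ s * gap_prod n s * qfact s)
        = of_nat (n choose s) * q ^ s * (1 - q) ^ (n - s) * ((1 - q) ^ s * qfact s * gap_prod n s)"
      by (simp only: mult_ac)
    then show "(1 - q) ^ n * (of_nat (n choose s) * q ^ s * gap_prod n s * qfact s)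
        = of_nat (n choose s) * q ^ s * (1 - q) ^ (n - s) * ?P"
      by (simp only: one_minus_q_power_qfact q_pochhammer_times_gap_prod[OF s])
  qed
  also have "\<dots> = (1 - q ^ n) * ?P"
    by (simp add: sum_distrib_right[symmetric] binomial_q_one_minus_q)
  also have "\<dots> = (\<Prod>i=1..n. 1 - q ^ i)"
    using assms by (cases n) (simp_all add: atLeastLessThanSuc_atLeastAtMost mult.commute)
  also have "\<dots> = (1 - q) ^ n * qfact n"
    by (rule one_minus_q_power_qfact[symmetric])
  finally show ?thesis using q_neq_one by simp
qed

lemma Theta_Psi_B: "Theta (Psi_B n) = qfact n"
proof (induction n rule: less_induct)
  case (less n)
  show ?case
  proof (cases "n = 0")
    case True
    then show ?thesis by (simp add: Theta_Psi_B_0 qfact_def)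
  next
    case False
    then show ?thesis
      using less by (simp add: Theta_Psi_B_recurrence qfact_recurrence)
  qed
qed

section \<open>The shelling components\<close>

lemma homogeneous_nc_c: "homogeneous 1 nc_c"
  and Theta_at_nc_c: "Theta_at k nc_c = 1 + q ^ Suc k"
  by (simp_all add: nc_c_def nc_add_def nc_a_def nc_b_def)

lemma homogeneous_Phi_check: "i < n \<Longrightarrow> homogeneous n (Phi_check n i)"
proof (induction i arbitrary: n)
  case 0
  then show ?case
    using homogeneous_nc_mult[OF homogeneous_Psi_B[of n] homogeneous_nc_c] by simp
next
  case (Suc i)
  then obtain m where "n = Suc m" "i < m" by (cases n) auto
  with Suc.IH show ?case by (simp add: homogeneous_G)
qed

lemma Theta_Phi_check:
  "i < n \<Longrightarrow> Theta (Phi_check n i) = q ^ i * qint (2 * (n - i)) * qfact (n - 1)"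
proof (induction i arbitrary: n)
  case 0
  then obtain m where n: "n = Suc m" by (cases n) auto
  have "Theta (Phi_check n 0) = qfact n * (1 + q ^ n)"
    using Theta_at_nc_mult[OF homogeneous_Psi_B, of 0 n nc_c]
    by (simp add: Theta_eq_Theta_at[symmetric] Theta_Psi_B Theta_at_nc_c n)
  then show ?case using qint_double[of n] by (simp add: n qfact_Suc mult_ac)
next
  case (Suc i)
  then obtain m where n: "n = Suc m" and i: "i < m" by (cases n) auto
  then obtain k where m: "m = Suc k" by (cases m) auto
  have "Theta (Phi_check n (Suc i)) = q * qint m * Theta (Phi_check m i)"
    using Theta_at_G[OF homogeneous_Phi_check[OF i]] by (simp add: n Theta_eq_Theta_at)
  with Suc.IH[OF i] show ?case by (simp add: n m qfact_Suc algebra_simps)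
qed

theorem mainTheorem4:
  fixes n i :: nat
  assumes "1 \<le> n" and "i \<le> n - 1"
  shows "Theta (Phi_check n i) = monom 1 i * qint (2 * (n - i)) * qfact (n - 1)"
  using assms by (simp add: Theta_Phi_check monom_one_eq_q_power)

end
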